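(* Assume $r(x,y)>0$ for all distinct $x,y\in S$. For all $N$, $k\in\{0,1,\dots,N-1\}$ and $x\in S$, $$\mu_N(\mathcal C_N^S(x,k+1))\le\frac{R_2(k+d_N)(N-k)}{R_1(k+1)(N-k-1+d_N)}\,\mu_N(\mathcal C_N^S(x,k)),$$ where $\mathcal C_N^S(x,k)=\{\eta\in\mathcal H_N:\eta_x=k\}$, $R_1=\min\{r(a,b):a,b\in S,\ r(a,b)>0\}$ and $R_2=\max\{r(a,b):a,b\in S\}$.
   Context: $S$ is a finite set, $r:S\times S\to[0,\infty)$ with $r(x,x)=0$. $\mathcal H_N=\{\eta\in\{0,1,2,\dots\}^S:\sum_x\eta_x=N\}$; $\sigma^{x,y}\eta$ moves one particle from $x$ to $y$ (if $\eta_x\ge1$; else $\sigma^{x,y}\eta=\eta$). With $d_N>0$, the inclusion process is the continuous-time Markov chain on $\mathcal H_N$ with generator $(\mathcal L_NF)(\eta)=\sum_{x\ne y}\eta_x(d_N+\eta_y)r(x,y)\{F(\sigma^{x,y}\eta)-F(\eta)\}$, and $\mu_N$ is its unique invariant probability measure. *)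

theory Defs
  imports Complex_Main
begin

text \<open>Sites: a finite type 'a (S = UNIV). Configurations: 'a \<Rightarrow> nat.\<close>

definition config_space :: "nat \<Rightarrow> ('a::finite \<Rightarrow> nat) set" where
  "config_space N = {\<eta>. (\<Sum>x\<in>UNIV. \<eta> x) = N}"

definition sigma_move :: "'a \<Rightarrow> 'a \<Rightarrow> ('a \<Rightarrow> nat) \<Rightarrow> ('a \<Rightarrow> nat)" where
  "sigma_move x y \<eta> = (if 1 \<le> \<eta> x then (\<eta>(x := \<eta> x - 1))(y := (\<eta>(x := \<eta> x - 1)) y + 1) else \<eta>)"

definition incl_gen ::
  "real \<Rightarrow> ('a::finite \<Rightarrow> 'a \<Rightarrow> real) \<Rightarrow> (('a \<Rightarrow> nat) \<Rightarrow> real) \<Rightarrow> ('a \<Rightarrow> nat) \<Rightarrow> real" where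
  "incl_gen d r F \<eta> =
     (\<Sum>x\<in>UNIV. \<Sum>y\<in>UNIV - {x}.
        real (\<eta> x) * (d + real (\<eta> y)) * r x y * (F (sigma_move x y \<eta>) - F \<eta>))"

definition incl_invariant ::
  "real \<Rightarrow> ('a::finite \<Rightarrow> 'a \<Rightarrow> real) \<Rightarrow> nat \<Rightarrow> (('a \<Rightarrow> nat) \<Rightarrow> real) \<Rightarrow> bool" where
  "incl_invariant d r N \<mu> \<longleftrightarrow>
     (\<forall>\<eta>. \<mu> \<eta> \<ge> 0) \<and> (\<forall>\<eta>. \<eta> \<notin> config_space N \<longrightarrow> \<mu> \<eta> = 0) \<and>
     (\<Sum>\<eta>\<in>config_space N. \<mu> \<eta>) = 1 \<and>
     (\<forall>F. (\<Sum>\<eta>\<in>config_space N. \<mu> \<eta> * incl_gen d r F \<eta>) = 0)"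

definition site_count_set :: "nat \<Rightarrow> 'a::finite \<Rightarrow> nat \<Rightarrow> ('a \<Rightarrow> nat) set" where
  "site_count_set N x k = {\<eta> \<in> config_space N. \<eta> x = k}"

definition R1 :: "('a::finite \<Rightarrow> 'a \<Rightarrow> real) \<Rightarrow> real" where
  "R1 r = Min {r a b | a b. r a b > 0}"

definition R2 :: "('a::finite \<Rightarrow> 'a \<Rightarrow> real) \<Rightarrow> real" where
  "R2 r = Max {r a b | a b. True}"

end

theory Submission
  imports Defs
begin

(* Test the invariance of \<mu> against F = 1{\<eta>_x \<le> k}.  A jump changes F only when a particle
   leaves x from level k+1 or enters x at level k, so the \<mu>-weighted exit flux out of
   {\<eta>_x = k+1} equals the entry flux into it from {\<eta>_x = k}.  On {\<eta>_x = k+1} the exit rate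
   \<Sum>_y \<eta>_x (d + \<eta>_y) r(x,y) is at least R1 (k+1) (N-k-1+d), because the other sites carry
   N-k-1 particles and there is at least one of them; on {\<eta>_x = k} the entry rate
   \<Sum>_z \<eta>_z (d + k) r(z,x) is at most R2 (k+d) (N-k). *)

definition incl_rate :: "real \<Rightarrow> ('a \<Rightarrow> 'a \<Rightarrow> real) \<Rightarrow> ('a \<Rightarrow> nat) \<Rightarrow> 'a \<Rightarrow> 'a \<Rightarrow> real" where
  "incl_rate d r \<eta> z y = real (\<eta> z) * (d + real (\<eta> y)) * r z y"

definition site_exit_rate :: "real \<Rightarrow> ('a::finite \<Rightarrow> 'a \<Rightarrow> real) \<Rightarrow> 'a \<Rightarrow> ('a \<Rightarrow> nat) \<Rightarrow> real" where
  "site_exit_rate d r x \<eta> = (\<Sum>y\<in>UNIV - {x}. incl_rate d r \<eta> x y)"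

definition site_entry_rate :: "real \<Rightarrow> ('a::finite \<Rightarrow> 'a \<Rightarrow> real) \<Rightarrow> 'a \<Rightarrow> ('a \<Rightarrow> nat) \<Rightarrow> real" where
  "site_entry_rate d r x \<eta> = (\<Sum>z\<in>UNIV - {x}. incl_rate d r \<eta> z x)"

lemma finite_config_space: "finite (config_space N :: ('a::finite \<Rightarrow> nat) set)"
proof (rule finite_subset)
  show "config_space N \<subseteq> {\<eta>::'a \<Rightarrow> nat. \<forall>x. (x \<in> UNIV \<longrightarrow> \<eta> x \<in> {..N}) \<and> (x \<notin> UNIV \<longrightarrow> \<eta> x = 0)}"
    by (auto simp: config_space_def intro: member_le_sum)
  show "finite \<dots>"
    by (rule finite_set_of_finite_funs) auto
qed

lemma sum_config_space_Diff_singleton: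
  assumes "\<eta> \<in> config_space N"
  shows "(\<Sum>y\<in>UNIV - {x}. real (\<eta> y)) = real N - real (\<eta> x)"
  using assms sum.remove[of UNIV x "\<lambda>y. real (\<eta> y)"]
  by (simp add: config_space_def flip: of_nat_sum)

lemma config_space_site_le: "\<eta> \<in> config_space N \<Longrightarrow> \<eta> x \<le> N"
  unfolding config_space_def by (auto intro: member_le_sum)

lemma sum_off_diagonal_row:
  fixes f :: "'a::finite \<Rightarrow> 'a \<Rightarrow> 'b::semiring_1"
  shows "(\<Sum>z\<in>UNIV. \<Sum>y\<in>UNIV - {z}. of_bool (z = x) * f z y) = (\<Sum>y\<in>UNIV - {x}. f x y)"
proof -
  have "(\<Sum>z\<in>UNIV. \<Sum>y\<in>UNIV - {z}. of_bool (z = x) * f z y)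
      = (\<Sum>z\<in>UNIV. of_bool (z = x) * (\<Sum>y\<in>UNIV - {z}. f z y))"
    by (simp add: sum_distrib_left)
  also have "\<dots> = (\<Sum>y\<in>UNIV - {x}. f x y)"
    by (simp add: Int_def)
  finally show ?thesis .
qed

lemma sum_off_diagonal_column:
  fixes f :: "'a::finite \<Rightarrow> 'a \<Rightarrow> 'b::semiring_1"
  shows "(\<Sum>z\<in>UNIV. \<Sum>y\<in>UNIV - {z}. of_bool (y = x) * f z y) = (\<Sum>z\<in>UNIV - {x}. f z x)"
proof -
  have "(\<Sum>y\<in>UNIV - {z}. of_bool (y = x) * f z y) = of_bool (z \<noteq> x) * f z x" for z
  proof -
    have "(\<Sum>y\<in>UNIV - {z}. of_bool (y = x) * f z y) = (\<Sum>y\<in>UNIV - {z}. if x = y then f z x else 0)"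
      by (intro sum.cong) auto
    then show ?thesis by auto
  qed
  then show ?thesis
    by (simp add: Collect_neg_eq Diff_eq)
qed

lemma site_le_change_sigma_move:
  assumes "z \<noteq> y" and "\<eta> z > 0"
  shows "of_bool (sigma_move z y \<eta> x \<le> k) - of_bool (\<eta> x \<le> k)
    = (of_bool (z = x \<and> \<eta> x = k + 1) - of_bool (y = x \<and> \<eta> x = k) :: real)"
  using assms by (auto simp: sigma_move_def)

lemma incl_gen_indicator_site_le:
  fixes \<eta> :: "'a::finite \<Rightarrow> nat"
  shows "incl_gen d r (\<lambda>\<eta>. of_bool (\<eta> x \<le> k)) \<eta>
    = of_bool (\<eta> x = k + 1) * site_exit_rate d r x \<eta> - of_bool (\<eta> x = k) * site_entry_rate d r x \<eta>"
proof -
  have "incl_gen d r (\<lambda>\<eta>. of_bool (\<eta> x \<le> k)) \<eta>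
      = (\<Sum>z\<in>UNIV. \<Sum>y\<in>UNIV - {z}. incl_rate d r \<eta> z y *
          (of_bool (z = x \<and> \<eta> x = k + 1) - of_bool (y = x \<and> \<eta> x = k)))"
    unfolding incl_gen_def incl_rate_def
  proof (intro sum.cong refl)
    fix z y :: 'a assume "y \<in> UNIV - {z}"
    then have "z \<noteq> y" by auto
    then show "real (\<eta> z) * (d + real (\<eta> y)) * r z y * (of_bool (sigma_move z y \<eta> x \<le> k) - of_bool (\<eta> x \<le> k))
        = real (\<eta> z) * (d + real (\<eta> y)) * r z y *
          (of_bool (z = x \<and> \<eta> x = k + 1) - of_bool (y = x \<and> \<eta> x = k))"
      by (cases "\<eta> z = 0") (simp_all add: site_le_change_sigma_move)
  qed
  also have "\<dots> = (\<Sum>z\<in>UNIV. \<Sum>y\<in>UNIV - {z}. of_bool (z = x) * (of_bool (\<eta> x = k + 1) * incl_rate d r \<eta> z y))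
      - (\<Sum>z\<in>UNIV. \<Sum>y\<in>UNIV - {z}. of_bool (y = x) * (of_bool (\<eta> x = k) * incl_rate d r \<eta> z y))"
    by (simp add: of_bool_conj sum_subtractf algebra_simps)
  finally show ?thesis
    unfolding sum_off_diagonal_row sum_off_diagonal_column site_exit_rate_def site_entry_rate_def
    by (simp add: sum_distrib_left)
qed

lemma incl_invariant_site_flux_balance:
  assumes "incl_invariant d r N \<mu>"
  shows "(\<Sum>\<eta>\<in>site_count_set N x (k + 1). \<mu> \<eta> * site_exit_rate d r x \<eta>)
    = (\<Sum>\<eta>\<in>site_count_set N x k. \<mu> \<eta> * site_entry_rate d r x \<eta>)"
proof -
  have "0 = (\<Sum>\<eta>\<in>config_space N. \<mu> \<eta> * incl_gen d r (\<lambda>\<eta>. of_bool (\<eta> x \<le> k)) \<eta>)"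
    using assms by (simp add: incl_invariant_def)
  also have "\<dots> = (\<Sum>\<eta>\<in>config_space N. of_bool (\<eta> x = k + 1) * (\<mu> \<eta> * site_exit_rate d r x \<eta>))
      - (\<Sum>\<eta>\<in>config_space N. of_bool (\<eta> x = k) * (\<mu> \<eta> * site_entry_rate d r x \<eta>))"
    by (simp add: incl_gen_indicator_site_le sum_subtractf algebra_simps)
  also have "\<dots> = (\<Sum>\<eta>\<in>site_count_set N x (k + 1). \<mu> \<eta> * site_exit_rate d r x \<eta>)
      - (\<Sum>\<eta>\<in>site_count_set N x k. \<mu> \<eta> * site_entry_rate d r x \<eta>)"
    by (simp only: sum_of_bool_mult_eq[OF finite_config_space] site_count_set_def
        Collect_conj_eq Collect_mem_eq)
  finally show ?thesis by simp
qed

lemma finite_rate_values: "finite {r a b | a b. P a b}"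
  for r :: "'a::finite \<Rightarrow> 'a \<Rightarrow> real"
proof (rule finite_subset)
  show "{r a b | a b. P a b} \<subseteq> case_prod r ` UNIV" by auto
qed simp

lemma R1_le:
  assumes "r a b > 0"
  shows "R1 r \<le> r a b"
  unfolding R1_def using assms by (intro Min_le finite_rate_values) auto

lemma R1_pos:
  assumes "r a b > 0"
  shows "R1 r > 0"
proof -
  have "R1 r \<in> {r a b | a b. r a b > 0}"
    unfolding R1_def using assms by (intro Min_in finite_rate_values) auto
  then show ?thesis by auto
qed

lemma R2_ge: "r a b \<le> R2 r"
  unfolding R2_def by (intro Max_ge finite_rate_values) auto

lemma exists_other_site:
  fixes x :: "'a::finite"
  assumes "card (UNIV :: 'a set) \<ge> 2"
  obtains y where "y \<noteq> x"
proof -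
  have "UNIV \<noteq> {x}"
  proof
    assume "UNIV = {x}"
    then have "card (UNIV :: 'a set) = card {x}" by (rule arg_cong)
    with assms show False by simp
  qed
  then show ?thesis using that by blast
qed

lemma R1_pos_if_off_diagonal_pos:
  fixes r :: "'a::finite \<Rightarrow> 'a \<Rightarrow> real"
  assumes "card (UNIV :: 'a set) \<ge> 2" and "\<And>a b. a \<noteq> b \<Longrightarrow> r a b > 0"
  shows "R1 r > 0"
proof -
  obtain y :: 'a where "y \<noteq> x" using assms(1) by (rule exists_other_site)
  then show ?thesis by (intro R1_pos assms(2))
qed

lemma site_exit_rate_ge:
  fixes r :: "'a::finite \<Rightarrow> 'a \<Rightarrow> real"
  assumes "card (UNIV :: 'a set) \<ge> 2" and "\<And>a b. a \<noteq> b \<Longrightarrow> r a b > 0"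
    and "d \<ge> 0" and "\<eta> \<in> config_space N"
  shows "R1 r * real (\<eta> x) * (real (N - \<eta> x) + d) \<le> site_exit_rate d r x \<eta>"
proof -
  have "R1 r > 0" using assms(1,2) by (rule R1_pos_if_off_diagonal_pos)
  have "card (UNIV - {x}) \<ge> 1" using assms(1) by (simp add: card_Diff_singleton)
  then have "1 * d \<le> real (card (UNIV - {x})) * d"
    using \<open>d \<ge> 0\<close> by (intro mult_right_mono) auto
  then have "R1 r * real (\<eta> x) * (real (N - \<eta> x) + d)
      \<le> R1 r * real (\<eta> x) * (real (card (UNIV - {x})) * d + (\<Sum>y\<in>UNIV - {x}. real (\<eta> y)))"
    using \<open>R1 r > 0\<close> sum_config_space_Diff_singleton[OF assms(4)] config_space_site_le[OF assms(4)]
    by (intro mult_left_mono) auto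
  also have "\<dots> = (\<Sum>y\<in>UNIV - {x}. real (\<eta> x) * (d + real (\<eta> y)) * R1 r)"
    by (simp add: sum.distrib sum_distrib_left sum_distrib_right algebra_simps)
  also have "\<dots> \<le> site_exit_rate d r x \<eta>"
    unfolding site_exit_rate_def incl_rate_def using assms(2,3)
    by (intro sum_mono mult_left_mono R1_le) auto
  finally show ?thesis .
qed

lemma site_entry_rate_le:
  assumes "d \<ge> 0" and "\<eta> \<in> config_space N"
  shows "site_entry_rate d r x \<eta> \<le> R2 r * (real (\<eta> x) + d) * real (N - \<eta> x)"
proof -
  have "site_entry_rate d r x \<eta> \<le> (\<Sum>z\<in>UNIV - {x}. real (\<eta> z) * (d + real (\<eta> x)) * R2 r)"
    unfolding site_entry_rate_def incl_rate_def using assms(1)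
    by (intro sum_mono mult_left_mono R2_ge) auto
  also have "\<dots> = R2 r * (d + real (\<eta> x)) * (\<Sum>z\<in>UNIV - {x}. real (\<eta> z))"
    by (simp add: sum_distrib_left mult_ac)
  also have "\<dots> = R2 r * (real (\<eta> x) + d) * real (N - \<eta> x)"
    using sum_config_space_Diff_singleton[OF assms(2)] config_space_site_le[OF assms(2)]
    by (simp add: of_nat_diff add.commute)
  finally show ?thesis .
qed

theorem lemma7p5:
  fixes r :: "'a::finite \<Rightarrow> 'a \<Rightarrow> real" and d :: real and N k :: nat and x :: 'a
    and \<mu> :: "('a \<Rightarrow> nat) \<Rightarrow> real"
  assumes "card (UNIV :: 'a set) \<ge> 2"
    and "\<And>a. r a a = 0"
    and "\<And>a b. a \<noteq> b \<Longrightarrow> r a b > 0"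
    and "d > 0"
    and "incl_invariant d r N \<mu>"
    and "k < N"
  shows "(\<Sum>\<eta>\<in>site_count_set N x (k+1). \<mu> \<eta>)
     \<le> (R2 r * (real k + d) * real (N - k)) / (R1 r * real (k + 1) * (real (N - k - 1) + d))
        * (\<Sum>\<eta>\<in>site_count_set N x k. \<mu> \<eta>)"
proof -
  define C where "C = R2 r * (real k + d) * real (N - k)"
  define D where "D = R1 r * real (k + 1) * (real (N - k - 1) + d)"
  have \<mu>_nonneg: "\<mu> \<eta> \<ge> 0" for \<eta>
    using assms(5) by (simp add: incl_invariant_def)
  have exit_bound: "D \<le> site_exit_rate d r x \<eta>" if "\<eta> \<in> site_count_set N x (k + 1)" for \<eta>
    using that site_exit_rate_ge[OF assms(1,3) less_imp_le[OF assms(4)], where \<eta> = \<eta> and x = x]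
    by (simp add: D_def site_count_set_def)
  have entry_bound: "site_entry_rate d r x \<eta> \<le> C" if "\<eta> \<in> site_count_set N x k" for \<eta>
    using that site_entry_rate_le[OF less_imp_le[OF assms(4)], where \<eta> = \<eta> and r = r and x = x]
    by (simp add: C_def site_count_set_def)
  have "R1 r > 0" using assms(1,3) by (rule R1_pos_if_off_diagonal_pos)
  then have "D > 0" unfolding D_def using assms(4) by (intro mult_pos_pos) auto
  have "(\<Sum>\<eta>\<in>site_count_set N x (k + 1). \<mu> \<eta>) * D
      \<le> (\<Sum>\<eta>\<in>site_count_set N x (k + 1). \<mu> \<eta> * site_exit_rate d r x \<eta>)"
    unfolding sum_distrib_right by (intro sum_mono mult_left_mono exit_bound \<mu>_nonneg)
  also have "\<dots> = (\<Sum>\<eta>\<in>site_count_set N x k. \<mu> \<eta> * site_entry_rate d r x \<eta>)"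
    using assms(5) by (rule incl_invariant_site_flux_balance)
  also have "\<dots> \<le> (\<Sum>\<eta>\<in>site_count_set N x k. \<mu> \<eta>) * C"
    unfolding sum_distrib_right by (intro sum_mono mult_left_mono entry_bound \<mu>_nonneg)
  finally have "(\<Sum>\<eta>\<in>site_count_set N x (k + 1). \<mu> \<eta>) \<le> C / D * (\<Sum>\<eta>\<in>site_count_set N x k. \<mu> \<eta>)"
    using \<open>D > 0\<close> by (simp add: pos_le_divide_eq mult.commute)
  then show ?thesis unfolding C_def D_def by simp
qed

end
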